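(* Let $\mathcal{A}$ be a family of finite subsets of $\omega_1$ closed under taking subsets and containing all singletons, and let $\mathcal{D}$ be a family of finite sets of consecutive pairs containing every single pair of $\omega_1$. Then $(\mathcal{X}_{\mathcal{A},\mathcal{D}},\|\cdot\|_{\mathcal{A},\mathcal{D}})$ is a Hilbert generated Banach space.
   Context: $c_{00}(\omega_1)$ is the set of finitely supported $x\in\mathbb{R}^{\omega_1}$; $\|x\|_\mathcal{A}=\sup_{A\in\mathcal{A}}\sqrt{\sum_{\alpha\in A}x(\alpha)^2}$. A set of consecutive pairs is a set $D$ of two-element subsets of $\omega_1$ such that for distinct $a,b\in D$, $\max a<\min b$ or $\max b<\min a$; "$\mathcal{D}$ contains every single pair" means $\{p\}\in\mathcal{D}$ for every two-element $p\subseteq\omega_1$. $\nu_\mathcal{D}(x)=\sup_{D\in\mathcal{D}}\sqrt{\sum_{\{\alpha,\beta\}\in D}|x(\alpha)-x(\beta)|^2}$, $\|x\|_{\mathcal{A},\mathcal{D}}=\nu_\mathcal{D}(x)+\|x\|_\mathcal{A}$, and $\mathcal{X}_{\mathcal{A},\mathcal{D}}$ is the completion of $c_{00}(\omega_1)$ with respect to $\|\cdot\|_{\mathcal{A},\mathcal{D}}$ (realized as the closure of $c_{00}(\omega_1)$ in $\{x\in\mathbb{R}^{\omega_1}:\|x\|_{\mathcal{A},\mathcal{D}}<\infty\}$). A Banach space is Hilbert generated if it is the dense range of a bounded linear operator from a Hilbert space. *)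

theory Defs
  imports "HOL-Analysis.Analysis"
begin

text \<open>The type 'a with its well-order plays the role of omega_1 (see theorem assumptions).
  Vectors in R^omega_1 are functions 'a \<Rightarrow> real.\<close>

definition c00 :: "('a \<Rightarrow> real) set" where
  "c00 = {x. finite {\<alpha>. x \<alpha> \<noteq> 0}}"

definition normA :: "'a set set \<Rightarrow> ('a \<Rightarrow> real) \<Rightarrow> ereal" where
  "normA \<A> x = (SUP A\<in>\<A>. ereal (sqrt (\<Sum>\<alpha>\<in>A. (x \<alpha>)^2)))"

definition consecutive_pairs :: "'a::linorder set set \<Rightarrow> bool" where
  "consecutive_pairs D \<longleftrightarrow> (\<forall>p\<in>D. card p = 2) \<and>
     (\<forall>a\<in>D. \<forall>b\<in>D. a \<noteq> b \<longrightarrow> Max a < Min b \<or> Max b < Min a)"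

definition nuD :: "'a::linorder set set set \<Rightarrow> ('a \<Rightarrow> real) \<Rightarrow> ereal" where
  "nuD \<D> x = (SUP D\<in>\<D>. ereal (sqrt (\<Sum>p\<in>D. (x (Min p) - x (Max p))^2)))"

definition normAD :: "'a set set \<Rightarrow> 'a::linorder set set set \<Rightarrow> ('a \<Rightarrow> real) \<Rightarrow> ereal" where
  "normAD \<A> \<D> x = nuD \<D> x + normA \<A> x"

definition XAD :: "'a set set \<Rightarrow> 'a::linorder set set set \<Rightarrow> ('a \<Rightarrow> real) set" where
  "XAD \<A> \<D> = {x. normAD \<A> \<D> x < \<infinity> \<and>
      (\<forall>\<epsilon>>0. \<exists>y\<in>c00. normAD \<A> \<D> (\<lambda>\<alpha>. x \<alpha> - y \<alpha>) < ereal \<epsilon>)}"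

definition banach_wrt :: "('a \<Rightarrow> real) set \<Rightarrow> (('a \<Rightarrow> real) \<Rightarrow> ereal) \<Rightarrow> bool" where
  "banach_wrt X N \<longleftrightarrow>
     (\<lambda>_. 0) \<in> X \<and> (\<forall>x\<in>X. \<forall>y\<in>X. (\<lambda>\<alpha>. x \<alpha> + y \<alpha>) \<in> X) \<and> (\<forall>x\<in>X. \<forall>c::real. (\<lambda>\<alpha>. c * x \<alpha>) \<in> X) \<and>
     (\<forall>x\<in>X. N x < \<infinity>) \<and>
     (\<forall>x\<in>X. N x = 0 \<longrightarrow> x = (\<lambda>_. 0)) \<and>
     (\<forall>x\<in>X. \<forall>y\<in>X. N (\<lambda>\<alpha>. x \<alpha> + y \<alpha>) \<le> N x + N y) \<and>
     (\<forall>x\<in>X. \<forall>c::real. N (\<lambda>\<alpha>. c * x \<alpha>) = ereal \<bar>c\<bar> * N x) \<and>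
     (\<forall>u::nat \<Rightarrow> ('a \<Rightarrow> real). (\<forall>n. u n \<in> X) \<longrightarrow>
        (\<forall>\<epsilon>>0. \<exists>M. \<forall>m\<ge>M. \<forall>n\<ge>M. N (\<lambda>\<alpha>. u m \<alpha> - u n \<alpha>) < ereal \<epsilon>) \<longrightarrow>
        (\<exists>x\<in>X. \<forall>\<epsilon>>0. \<exists>M. \<forall>n\<ge>M. N (\<lambda>\<alpha>. u n \<alpha> - x \<alpha>) < ereal \<epsilon>))"

definition l2 :: "('b \<Rightarrow> real) set" where
  "l2 = {h. (\<lambda>\<gamma>. (h \<gamma>)^2) summable_on UNIV}"

definition l2norm :: "('b \<Rightarrow> real) \<Rightarrow> real" where
  "l2norm h = sqrt (infsum (\<lambda>\<gamma>. (h \<gamma>)^2) UNIV)"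

definition l2_generated :: "('b \<Rightarrow> real) itself \<Rightarrow> ('a \<Rightarrow> real) set \<Rightarrow> (('a \<Rightarrow> real) \<Rightarrow> ereal) \<Rightarrow> bool" where
  "l2_generated _ X N \<longleftrightarrow> (\<exists>T :: ('b \<Rightarrow> real) \<Rightarrow> ('a \<Rightarrow> real).
      (\<forall>h\<in>l2. T h \<in> X) \<and>
      (\<forall>h\<in>l2. \<forall>g\<in>l2. \<forall>a b::real. T (\<lambda>\<gamma>. a * h \<gamma> + b * g \<gamma>) = (\<lambda>\<alpha>. a * T h \<alpha> + b * T g \<alpha>)) \<and>
      (\<exists>C::real. \<forall>h\<in>l2. N (T h) \<le> ereal (C * l2norm h)) \<and>
      (\<forall>x\<in>X. \<forall>\<epsilon>>0. \<exists>h\<in>l2. N (\<lambda>\<alpha>. T h \<alpha> - x \<alpha>) < ereal \<epsilon>))"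

end

theory Submission
  imports Defs
begin

(* The identity map of l2(omega_1) is the required operator. For x in l2, every A-sum is a
   finite l2-sum, and a set D of consecutive pairs has pairwise disjoint members, so Min and
   Max are injective on D and nu_D(x) <= 2 ||x||_2; hence ||x||_{A,D} <= 3 ||x||_2, and
   truncating x to a large finite set shows that x lies in X_{A,D}. Density is clear since
   c00 is contained in l2. Completeness holds because ||.||_{A,D} is a supremum of seminorms
   each depending on finitely many coordinates: such a norm is lower semicontinuous under
   coordinatewise convergence, and since singletons belong to A it dominates every coordinate,
   so a Cauchy sequence converges coordinatewise and then in norm. *)

section \<open>Suprema of pointwise continuous seminorms\<close>

definition sup_seminorm :: "'s set \<Rightarrow> ('s \<Rightarrow> ('a \<Rightarrow> real) \<Rightarrow> real) \<Rightarrow> ('a \<Rightarrow> real) \<Rightarrow> ereal" where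
  "sup_seminorm S p x = (SUP s\<in>S. ereal (p s x))"

definition c00_closure :: "(('a \<Rightarrow> real) \<Rightarrow> ereal) \<Rightarrow> ('a \<Rightarrow> real) set" where
  "c00_closure N = {x. N x < \<infinity> \<and> (\<forall>\<epsilon>>0. \<exists>y\<in>c00. N (\<lambda>\<alpha>. x \<alpha> - y \<alpha>) < ereal \<epsilon>)}"

lemma ereal_add_less_add:
  fixes a b :: ereal
  shows "a \<le> ereal e1 \<Longrightarrow> b < ereal e2 \<Longrightarrow> a + b < ereal (e1 + e2)"
  by (cases a; cases b) auto

lemma c00_zero: "(\<lambda>_. 0) \<in> c00"
  unfolding c00_def by simp

lemma c00_add: "x \<in> c00 \<Longrightarrow> y \<in> c00 \<Longrightarrow> (\<lambda>\<alpha>. x \<alpha> + y \<alpha>) \<in> c00"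
  unfolding c00_def by (auto intro: finite_subset[of _ "{\<alpha>. x \<alpha> \<noteq> 0} \<union> {\<alpha>. y \<alpha> \<noteq> 0}"])

lemma c00_scale: "x \<in> c00 \<Longrightarrow> (\<lambda>\<alpha>. c * x \<alpha>) \<in> c00"
  unfolding c00_def by (auto elim: finite_subset[rotated])

locale pointwise_continuous_seminorms =
  fixes S :: "'s set" and p :: "'s \<Rightarrow> ('a \<Rightarrow> real) \<Rightarrow> real"
  assumes index_nonempty: "S \<noteq> {}"
    and triangle: "p s (\<lambda>\<alpha>. x \<alpha> + y \<alpha>) \<le> p s x + p s y"
    and homogeneous: "p s (\<lambda>\<alpha>. c * x \<alpha>) = \<bar>c\<bar> * p s x"
    and pointwise_continuous: "(\<And>\<alpha>. (\<lambda>m. z m \<alpha>) \<longlonglongrightarrow> z0 \<alpha>) \<Longrightarrow> (\<lambda>m. p s (z m)) \<longlonglongrightarrow> p s z0"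
begin

abbreviation N :: "('a \<Rightarrow> real) \<Rightarrow> ereal" where
  "N \<equiv> sup_seminorm S p"

lemma seminorm_nonneg: "0 \<le> p s x"
proof -
  have "0 = p s (\<lambda>\<alpha>. 0 * x \<alpha>)" using homogeneous[of s 0 x] by simp
  also have "\<dots> = p s (\<lambda>\<alpha>. x \<alpha> + (-1) * x \<alpha>)" by simp
  also have "\<dots> \<le> p s x + p s (\<lambda>\<alpha>. (-1) * x \<alpha>)" by (rule triangle)
  also have "\<dots> = 2 * p s x" using homogeneous[of s "-1" x] by simp
  finally show ?thesis by simp
qed

lemma N_le_iff: "N x \<le> ereal e \<longleftrightarrow> (\<forall>s\<in>S. p s x \<le> e)"
  unfolding sup_seminorm_def by (simp add: SUP_le_iff)

lemma N_nonneg: "0 \<le> N x"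
proof -
  obtain s where "s \<in> S" using index_nonempty by blast
  then have "ereal (p s x) \<le> N x" unfolding sup_seminorm_def by (rule SUP_upper)
  then show ?thesis using seminorm_nonneg[of s x] by (simp add: order_trans[rotated])
qed

lemma N_triangle: "N (\<lambda>\<alpha>. x \<alpha> + y \<alpha>) \<le> N x + N y"
  unfolding sup_seminorm_def
proof (rule SUP_least)
  fix s assume "s \<in> S"
  have "ereal (p s (\<lambda>\<alpha>. x \<alpha> + y \<alpha>)) \<le> ereal (p s x) + ereal (p s y)"
    using triangle by simp
  also have "\<dots> \<le> (SUP s\<in>S. ereal (p s x)) + (SUP s\<in>S. ereal (p s y))"
    using \<open>s \<in> S\<close> by (intro add_mono SUP_upper)
  finally show "ereal (p s (\<lambda>\<alpha>. x \<alpha> + y \<alpha>)) \<le> \<dots>" .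
qed

lemma N_homogeneous: "N (\<lambda>\<alpha>. c * x \<alpha>) = ereal \<bar>c\<bar> * N x"
proof -
  have "N (\<lambda>\<alpha>. c * x \<alpha>) = (SUP s\<in>S. ereal \<bar>c\<bar> * ereal (p s x))"
    unfolding sup_seminorm_def homogeneous by simp
  also have "\<dots> = ereal \<bar>c\<bar> * N x"
    unfolding sup_seminorm_def using index_nonempty seminorm_nonneg by (intro SUP_ereal_mult_left) auto
  finally show ?thesis .
qed

lemma N_zero: "N (\<lambda>_. 0) = 0"
  using N_homogeneous[of 0 "\<lambda>_. 0"] by (simp flip: zero_ereal_def)

lemma N_minus_commute: "N (\<lambda>\<alpha>. x \<alpha> - y \<alpha>) = N (\<lambda>\<alpha>. y \<alpha> - x \<alpha>)"
  using N_homogeneous[of "-1" "\<lambda>\<alpha>. x \<alpha> - y \<alpha>"] by simp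

lemma N_diff_triangle: "N (\<lambda>\<alpha>. x \<alpha> - z \<alpha>) \<le> N (\<lambda>\<alpha>. x \<alpha> - y \<alpha>) + N (\<lambda>\<alpha>. y \<alpha> - z \<alpha>)"
  using N_triangle[of "\<lambda>\<alpha>. x \<alpha> - y \<alpha>" "\<lambda>\<alpha>. y \<alpha> - z \<alpha>"] by simp

lemma N_pointwise_limit_le:
  assumes "\<And>\<alpha>. (\<lambda>m. z m \<alpha>) \<longlonglongrightarrow> z0 \<alpha>" and "eventually (\<lambda>m. N (z m) \<le> ereal e) sequentially"
  shows "N z0 \<le> ereal e"
  unfolding N_le_iff
proof
  fix s assume "s \<in> S"
  with assms(2) have "eventually (\<lambda>m. p s (z m) \<le> e) sequentially"
    by (auto simp: N_le_iff elim: eventually_mono)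
  then show "p s z0 \<le> e"
    using pointwise_continuous[OF assms(1)] by (intro tendsto_upperbound) auto
qed

lemma c00_closure_finite: "x \<in> c00_closure N \<Longrightarrow> N x < \<infinity>"
  unfolding c00_closure_def by simp

lemma c00_closureD: "x \<in> c00_closure N \<Longrightarrow> \<epsilon> > 0 \<Longrightarrow> \<exists>y\<in>c00. N (\<lambda>\<alpha>. x \<alpha> - y \<alpha>) < ereal \<epsilon>"
  unfolding c00_closure_def by simp

lemma c00_closure_zero: "(\<lambda>_. 0) \<in> c00_closure N"
  unfolding c00_closure_def using N_zero c00_zero by (auto intro!: bexI[of _ "\<lambda>_. 0"])

lemma c00_closure_add:
  assumes x: "x \<in> c00_closure N" and y: "y \<in> c00_closure N"
  shows "(\<lambda>\<alpha>. x \<alpha> + y \<alpha>) \<in> c00_closure N"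
proof -
  have "N (\<lambda>\<alpha>. x \<alpha> + y \<alpha>) < \<infinity>"
    using N_triangle[of x y] c00_closure_finite[OF x] c00_closure_finite[OF y]
    by (auto simp: order.strict_trans1)
  moreover have "\<exists>w\<in>c00. N (\<lambda>\<alpha>. (x \<alpha> + y \<alpha>) - w \<alpha>) < ereal \<epsilon>" if "\<epsilon> > 0" for \<epsilon>
  proof -
    obtain x' where "x' \<in> c00" and x': "N (\<lambda>\<alpha>. x \<alpha> - x' \<alpha>) < ereal (\<epsilon>/2)"
      using c00_closureD[OF x, of "\<epsilon>/2"] \<open>\<epsilon> > 0\<close> by auto
    obtain y' where "y' \<in> c00" and y': "N (\<lambda>\<alpha>. y \<alpha> - y' \<alpha>) < ereal (\<epsilon>/2)"
      using c00_closureD[OF y, of "\<epsilon>/2"] \<open>\<epsilon> > 0\<close> by auto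
    have "N (\<lambda>\<alpha>. (x \<alpha> + y \<alpha>) - (x' \<alpha> + y' \<alpha>)) = N (\<lambda>\<alpha>. (x \<alpha> - x' \<alpha>) + (y \<alpha> - y' \<alpha>))"
      by (simp add: algebra_simps)
    also have "\<dots> \<le> N (\<lambda>\<alpha>. x \<alpha> - x' \<alpha>) + N (\<lambda>\<alpha>. y \<alpha> - y' \<alpha>)" by (rule N_triangle)
    also have "\<dots> < ereal (\<epsilon>/2 + \<epsilon>/2)" using x' y' by (intro ereal_add_less_add less_imp_le)
    finally show ?thesis using c00_add[OF \<open>x' \<in> c00\<close> \<open>y' \<in> c00\<close>] by auto
  qed
  ultimately show ?thesis unfolding c00_closure_def by auto
qed

lemma c00_closure_scale:
  assumes x: "x \<in> c00_closure N"
  shows "(\<lambda>\<alpha>. c * x \<alpha>) \<in> c00_closure N"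
proof (cases "c = 0")
  case True
  then show ?thesis using c00_closure_zero by simp
next
  case False
  have "N (\<lambda>\<alpha>. c * x \<alpha>) < \<infinity>" using c00_closure_finite[OF x] unfolding N_homogeneous by simp
  moreover have "\<exists>w\<in>c00. N (\<lambda>\<alpha>. c * x \<alpha> - w \<alpha>) < ereal \<epsilon>" if "\<epsilon> > 0" for \<epsilon>
  proof -
    obtain x' where "x' \<in> c00" and x': "N (\<lambda>\<alpha>. x \<alpha> - x' \<alpha>) < ereal (\<epsilon> / \<bar>c\<bar>)"
      using c00_closureD[OF x, of "\<epsilon> / \<bar>c\<bar>"] \<open>\<epsilon> > 0\<close> False by auto
    have "N (\<lambda>\<alpha>. c * x \<alpha> - c * x' \<alpha>) = ereal \<bar>c\<bar> * N (\<lambda>\<alpha>. x \<alpha> - x' \<alpha>)"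
      using N_homogeneous[of c "\<lambda>\<alpha>. x \<alpha> - x' \<alpha>"] by (simp add: algebra_simps)
    also have "\<dots> < ereal \<bar>c\<bar> * ereal (\<epsilon> / \<bar>c\<bar>)"
      using x' False N_nonneg[of "\<lambda>\<alpha>. x \<alpha> - x' \<alpha>"]
      by (cases "N (\<lambda>\<alpha>. x \<alpha> - x' \<alpha>)") (auto simp: less_divide_eq mult.commute)
    also have "\<dots> = ereal \<epsilon>" using False by simp
    finally show ?thesis using c00_scale[OF \<open>x' \<in> c00\<close>] by auto
  qed
  ultimately show ?thesis unfolding c00_closure_def by auto
qed

lemma c00_closure_closed:
  assumes "\<And>\<epsilon>. \<epsilon> > 0 \<Longrightarrow> \<exists>y\<in>c00_closure N. N (\<lambda>\<alpha>. x \<alpha> - y \<alpha>) \<le> ereal \<epsilon>"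
  shows "x \<in> c00_closure N"
proof -
  obtain y where y: "y \<in> c00_closure N" "N (\<lambda>\<alpha>. x \<alpha> - y \<alpha>) \<le> ereal 1" using assms[of 1] by auto
  have "N x \<le> N (\<lambda>\<alpha>. x \<alpha> - y \<alpha>) + N y" using N_triangle[of "\<lambda>\<alpha>. x \<alpha> - y \<alpha>" y] by simp
  also have "\<dots> < \<infinity>" using y c00_closure_finite by auto
  finally have "N x < \<infinity>" .
  moreover have "\<exists>w\<in>c00. N (\<lambda>\<alpha>. x \<alpha> - w \<alpha>) < ereal \<epsilon>" if "\<epsilon> > 0" for \<epsilon>
  proof -
    obtain y where "y \<in> c00_closure N" and xy: "N (\<lambda>\<alpha>. x \<alpha> - y \<alpha>) \<le> ereal (\<epsilon>/2)"
      using assms[of "\<epsilon>/2"] \<open>\<epsilon> > 0\<close> by auto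
    then obtain w where "w \<in> c00" and yw: "N (\<lambda>\<alpha>. y \<alpha> - w \<alpha>) < ereal (\<epsilon>/2)"
      using c00_closureD[of y "\<epsilon>/2"] \<open>\<epsilon> > 0\<close> by auto
    have "N (\<lambda>\<alpha>. x \<alpha> - w \<alpha>) \<le> N (\<lambda>\<alpha>. x \<alpha> - y \<alpha>) + N (\<lambda>\<alpha>. y \<alpha> - w \<alpha>)" by (rule N_diff_triangle)
    also have "\<dots> < ereal (\<epsilon>/2 + \<epsilon>/2)" using xy yw by (rule ereal_add_less_add)
    finally show ?thesis using \<open>w \<in> c00\<close> by auto
  qed
  ultimately show ?thesis unfolding c00_closure_def by auto
qed

context
  assumes coordinate_le: "\<And>x \<alpha>. ereal \<bar>x \<alpha>\<bar> \<le> N x"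
begin

lemma N_Cauchy_imp_pointwise_convergent:
  fixes u :: "nat \<Rightarrow> 'a \<Rightarrow> real"
  assumes Cauchy: "\<forall>\<epsilon>>0. \<exists>M. \<forall>m\<ge>M. \<forall>n\<ge>M. N (\<lambda>\<alpha>. u m \<alpha> - u n \<alpha>) < ereal \<epsilon>"
  shows "convergent (\<lambda>n. u n \<alpha>)"
proof -
  have "Cauchy (\<lambda>n. u n \<alpha>)"
  proof (rule metric_CauchyI)
    fix \<epsilon> :: real assume "\<epsilon> > 0"
    then obtain M where M: "\<forall>m\<ge>M. \<forall>n\<ge>M. N (\<lambda>\<alpha>. u m \<alpha> - u n \<alpha>) < ereal \<epsilon>" using Cauchy by blast
    have "dist (u m \<alpha>) (u n \<alpha>) < \<epsilon>" if "m \<ge> M" "n \<ge> M" for m n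
    proof -
      have "ereal \<bar>u m \<alpha> - u n \<alpha>\<bar> < ereal \<epsilon>"
        using M that coordinate_le[of "\<lambda>\<alpha>. u m \<alpha> - u n \<alpha>" \<alpha>] by (meson order.strict_trans1)
      then show ?thesis by (simp add: dist_real_def)
    qed
    then show "\<exists>M. \<forall>m\<ge>M. \<forall>n\<ge>M. dist (u m \<alpha>) (u n \<alpha>) < \<epsilon>" by blast
  qed
  then show ?thesis by (simp add: Cauchy_convergent_iff)
qed

lemma N_Cauchy_pointwise_limit:
  fixes u :: "nat \<Rightarrow> 'a \<Rightarrow> real"
  assumes Cauchy: "\<forall>\<epsilon>>0. \<exists>M. \<forall>m\<ge>M. \<forall>n\<ge>M. N (\<lambda>\<alpha>. u m \<alpha> - u n \<alpha>) < ereal \<epsilon>"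
    and lim: "\<And>\<alpha>. (\<lambda>n. u n \<alpha>) \<longlonglongrightarrow> x \<alpha>" and "\<epsilon> > 0"
  shows "\<exists>M. \<forall>n\<ge>M. N (\<lambda>\<alpha>. u n \<alpha> - x \<alpha>) \<le> ereal \<epsilon>"
proof -
  obtain M where M: "\<forall>m\<ge>M. \<forall>n\<ge>M. N (\<lambda>\<alpha>. u n \<alpha> - u m \<alpha>) < ereal \<epsilon>" using Cauchy \<open>\<epsilon> > 0\<close> by blast
  have "N (\<lambda>\<alpha>. u n \<alpha> - x \<alpha>) \<le> ereal \<epsilon>" if "n \<ge> M" for n
  proof (rule N_pointwise_limit_le)
    show "(\<lambda>m. u n \<alpha> - u m \<alpha>) \<longlonglongrightarrow> u n \<alpha> - x \<alpha>" for \<alpha> using lim by (intro tendsto_intros)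
    show "eventually (\<lambda>m. N (\<lambda>\<alpha>. u n \<alpha> - u m \<alpha>) \<le> ereal \<epsilon>) sequentially"
      using M \<open>n \<ge> M\<close> unfolding eventually_sequentially by (meson less_imp_le)
  qed
  then show ?thesis by blast
qed

lemma c00_closure_complete:
  fixes u :: "nat \<Rightarrow> 'a \<Rightarrow> real"
  assumes u: "\<And>n. u n \<in> c00_closure N"
    and Cauchy: "\<forall>\<epsilon>>0. \<exists>M. \<forall>m\<ge>M. \<forall>n\<ge>M. N (\<lambda>\<alpha>. u m \<alpha> - u n \<alpha>) < ereal \<epsilon>"
  shows "\<exists>x\<in>c00_closure N. \<forall>\<epsilon>>0. \<exists>M. \<forall>n\<ge>M. N (\<lambda>\<alpha>. u n \<alpha> - x \<alpha>) < ereal \<epsilon>"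
proof -
  define x where "x \<alpha> = lim (\<lambda>n. u n \<alpha>)" for \<alpha>
  have lim: "(\<lambda>n. u n \<alpha>) \<longlonglongrightarrow> x \<alpha>" for \<alpha>
    unfolding x_def using N_Cauchy_imp_pointwise_convergent[OF Cauchy] by (simp add: convergent_LIMSEQ_iff)
  note tail = N_Cauchy_pointwise_limit[OF Cauchy lim]
  have "x \<in> c00_closure N"
  proof (rule c00_closure_closed)
    fix \<epsilon> :: real assume "\<epsilon> > 0"
    then obtain n where "N (\<lambda>\<alpha>. u n \<alpha> - x \<alpha>) \<le> ereal \<epsilon>" using tail by blast
    then show "\<exists>y\<in>c00_closure N. N (\<lambda>\<alpha>. x \<alpha> - y \<alpha>) \<le> ereal \<epsilon>"
      using u N_minus_commute by metis
  qed
  moreover have "\<exists>M. \<forall>n\<ge>M. N (\<lambda>\<alpha>. u n \<alpha> - x \<alpha>) < ereal \<epsilon>" if "\<epsilon> > 0" for \<epsilon>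
    using tail[of "\<epsilon>/2"] that by (fastforce dest: order.strict_trans1[of _ "ereal (\<epsilon>/2)" "ereal \<epsilon>"])
  ultimately show ?thesis by blast
qed

theorem banach_wrt_c00_closure: "banach_wrt (c00_closure N) N"
  unfolding banach_wrt_def
proof (intro conjI ballI allI impI)
  fix x assume "N x = 0"
  then have "ereal \<bar>x \<alpha>\<bar> \<le> 0" for \<alpha> using coordinate_le[of x \<alpha>] by simp
  then show "x = (\<lambda>_. 0)" by (auto simp: zero_ereal_def)
qed (auto dest: c00_closure_finite intro: c00_closure_zero c00_closure_add c00_closure_scale
    N_triangle N_homogeneous c00_closure_complete)

end

end

section \<open>The identity of l2 into the c00-closure\<close>

lemma c00_subset_l2: "c00 \<subseteq> l2"
  unfolding c00_def l2_def
  by (auto intro!: finite_nonzero_values_imp_summable_on elim: finite_subset[rotated])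

lemma L2_set_le_l2norm:
  assumes "h \<in> l2" "finite G"
  shows "L2_set h G \<le> l2norm h"
  unfolding L2_set_def l2norm_def
  using assms unfolding l2_def by (intro real_sqrt_le_mono finite_sum_le_infsum) auto

lemma l2_tail_small:
  assumes "h \<in> l2" "e > 0"
  obtains F where "finite F" "\<And>G. finite G \<Longrightarrow> L2_set h (G - F) \<le> e"
proof -
  define S where "S = infsum (\<lambda>\<gamma>. (h \<gamma>)^2) UNIV"
  have "((\<lambda>\<gamma>. (h \<gamma>)^2) has_sum S) UNIV"
    using assms(1) has_sum_infsum unfolding l2_def S_def by blast
  moreover have "e^2 > 0" using assms(2) by simp
  ultimately have "eventually (\<lambda>F. dist (\<Sum>\<gamma>\<in>F. (h \<gamma>)^2) S < e^2) (finite_subsets_at_top UNIV)"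
    unfolding has_sum_def tendsto_iff by blast
  then obtain F where F: "finite F" "dist (\<Sum>\<gamma>\<in>F. (h \<gamma>)^2) S < e^2"
    unfolding eventually_finite_subsets_at_top by blast
  have "L2_set h (G - F) \<le> e" if "finite G" for G
  proof -
    have "(\<Sum>\<alpha>\<in>G - F. (h \<alpha>)^2) = (\<Sum>\<alpha>\<in>G \<union> F. (h \<alpha>)^2) - (\<Sum>\<alpha>\<in>F. (h \<alpha>)^2)"
      using sum.subset_diff[of F "G \<union> F" "\<lambda>\<alpha>. (h \<alpha>)^2"] \<open>finite G\<close> F(1) by (simp add: Un_Diff)
    also have "\<dots> \<le> S - (\<Sum>\<alpha>\<in>F. (h \<alpha>)^2)"
      using L2_set_le_l2norm[OF assms(1), of "G \<union> F"] \<open>finite G\<close> F(1)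
      unfolding L2_set_def l2norm_def S_def by (simp add: sum_nonneg)
    also have "\<dots> \<le> e^2" using F(2) by (simp add: dist_real_def)
    finally show ?thesis
      unfolding L2_set_def using assms(2) by (intro real_le_lsqrt) auto
  qed
  with F(1) that show ?thesis by blast
qed

context pointwise_continuous_seminorms
begin

context
  fixes C :: real
  assumes l2_bound: "\<And>z b. (\<And>G. finite G \<Longrightarrow> L2_set z G \<le> b) \<Longrightarrow> N z \<le> ereal (C * b)"
begin

lemma l2_subset_c00_closure: "l2 \<subseteq> c00_closure N"
proof
  fix h :: "'a \<Rightarrow> real" assume h: "h \<in> l2"
  have "N h < \<infinity>"
    using l2_bound[OF L2_set_le_l2norm[OF h]] by (auto simp: order.strict_trans1)
  moreover have "\<exists>y\<in>c00. N (\<lambda>\<alpha>. h \<alpha> - y \<alpha>) < ereal \<epsilon>" if "\<epsilon> > 0" for \<epsilon>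
  proof -
    define e where "e = \<epsilon> / (\<bar>C\<bar> + 1)"
    have "e > 0" using \<open>\<epsilon> > 0\<close> unfolding e_def by simp
    then obtain F where "finite F" and F: "\<And>G. finite G \<Longrightarrow> L2_set h (G - F) \<le> e"
      using l2_tail_small[OF h] by blast
    define y where "y \<alpha> = (if \<alpha> \<in> F then h \<alpha> else 0)" for \<alpha>
    have "y \<in> c00" unfolding c00_def y_def using \<open>finite F\<close> by (auto elim: finite_subset[rotated])
    have "L2_set (\<lambda>\<alpha>. h \<alpha> - y \<alpha>) G = L2_set h (G - F)" if "finite G" for G
      unfolding L2_set_def y_def by (rule arg_cong[of _ _ sqrt], rule sum.mono_neutral_cong_right) (use that in auto)
    then have "N (\<lambda>\<alpha>. h \<alpha> - y \<alpha>) \<le> ereal (C * e)" using F by (intro l2_bound) simp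
    also have "C * e \<le> \<bar>C\<bar> * e" using \<open>e > 0\<close> by (simp add: mult_right_mono)
    also have "\<dots> < (\<bar>C\<bar> + 1) * e" using \<open>e > 0\<close> by simp
    also have "\<dots> = \<epsilon>" unfolding e_def by simp
    finally show ?thesis using \<open>y \<in> c00\<close> by auto
  qed
  ultimately show "h \<in> c00_closure N" unfolding c00_closure_def by auto
qed

theorem l2_generated_c00_closure: "l2_generated TYPE('a \<Rightarrow> real) (c00_closure N) N"
  unfolding l2_generated_def
proof (intro exI[of _ "\<lambda>h. h"] conjI ballI allI impI)
  show "h \<in> c00_closure N" if "h \<in> l2" for h using that l2_subset_c00_closure by blast
  show "\<exists>C. \<forall>h\<in>l2. N h \<le> ereal (C * l2norm h)"
    using l2_bound L2_set_le_l2norm by blast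
  fix x :: "'a \<Rightarrow> real" and \<epsilon> :: real assume "x \<in> c00_closure N" "\<epsilon> > 0"
  then obtain y where "y \<in> c00" "N (\<lambda>\<alpha>. x \<alpha> - y \<alpha>) < ereal \<epsilon>" unfolding c00_closure_def by blast
  then show "\<exists>h\<in>l2. N (\<lambda>\<alpha>. h \<alpha> - x \<alpha>) < ereal \<epsilon>"
    using c00_subset_l2 N_minus_commute[of y x] by (intro bexI[of _ y]) auto
qed simp

end

end

section \<open>The norm of X_{A,D} as a supremum of seminorms\<close>

lemma L2_set_mult: "L2_set (\<lambda>i. c * f i) A = \<bar>c\<bar> * L2_set f A"
  by (simp add: L2_set_def power_mult_distrib real_sqrt_mult flip: sum_distrib_left)

lemma L2_set_uminus [simp]: "L2_set (\<lambda>i. - f i) A = L2_set f A"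
  by (simp add: L2_set_def)

lemma L2_set_reindex: "inj_on g A \<Longrightarrow> L2_set (\<lambda>i. f (g i)) A = L2_set f (g ` A)"
  by (simp add: L2_set_def sum.reindex)

definition AD_seminorm :: "'a::linorder set set \<times> 'a set \<Rightarrow> ('a \<Rightarrow> real) \<Rightarrow> real" where
  "AD_seminorm s x = L2_set (\<lambda>q. x (Min q) - x (Max q)) (fst s) + L2_set x (snd s)"

lemma normAD_eq_sup_seminorm:
  assumes "\<A> \<noteq> {}" "\<D> \<noteq> {}"
  shows "normAD \<A> \<D> = sup_seminorm (\<D> \<times> \<A>) AD_seminorm"
proof
  fix x :: "'a \<Rightarrow> real"
  obtain A where "A \<in> \<A>" using assms(1) by blast
  then have "ereal (L2_set x A) \<le> (SUP A\<in>\<A>. ereal (L2_set x A))" by (rule SUP_upper)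
  then have normA_finite: "(SUP A\<in>\<A>. ereal (L2_set x A)) \<noteq> -\<infinity>" by auto
  have "normAD \<A> \<D> x = (SUP D\<in>\<D>. ereal (L2_set (\<lambda>q. x (Min q) - x (Max q)) D)) + (SUP A\<in>\<A>. ereal (L2_set x A))"
    by (simp add: normAD_def nuD_def normA_def L2_set_def)
  also have "\<dots> = (SUP D\<in>\<D>. ereal (L2_set (\<lambda>q. x (Min q) - x (Max q)) D) + (SUP A\<in>\<A>. ereal (L2_set x A)))"
    using assms(2) normA_finite by (rule SUP_ereal_add_left[symmetric])
  also have "\<dots> = (SUP D\<in>\<D>. SUP A\<in>\<A>. ereal (L2_set (\<lambda>q. x (Min q) - x (Max q)) D) + ereal (L2_set x A))"
    using assms(1) by (intro SUP_cong refl SUP_ereal_add_right[symmetric]) auto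
  also have "\<dots> = sup_seminorm (\<D> \<times> \<A>) AD_seminorm x"
    unfolding SUP_pair sup_seminorm_def AD_seminorm_def by simp
  finally show "normAD \<A> \<D> x = sup_seminorm (\<D> \<times> \<A>) AD_seminorm x" .
qed

lemma pointwise_continuous_seminorms_AD:
  assumes "S \<noteq> {}"
  shows "pointwise_continuous_seminorms S AD_seminorm"
proof
  fix s :: "'a set set \<times> 'a set" and x y :: "'a \<Rightarrow> real"
  have "(\<lambda>q. (x (Min q) + y (Min q)) - (x (Max q) + y (Max q))) =
        (\<lambda>q. (x (Min q) - x (Max q)) + (y (Min q) - y (Max q)))" by (simp add: fun_eq_iff)
  then have "L2_set (\<lambda>q. (x (Min q) + y (Min q)) - (x (Max q) + y (Max q))) (fst s)
      \<le> L2_set (\<lambda>q. x (Min q) - x (Max q)) (fst s) + L2_set (\<lambda>q. y (Min q) - y (Max q)) (fst s)"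
    by (simp only:) (rule L2_set_triangle_ineq)
  moreover have "L2_set (\<lambda>\<alpha>. x \<alpha> + y \<alpha>) (snd s) \<le> L2_set x (snd s) + L2_set y (snd s)"
    by (rule L2_set_triangle_ineq)
  ultimately show "AD_seminorm s (\<lambda>\<alpha>. x \<alpha> + y \<alpha>) \<le> AD_seminorm s x + AD_seminorm s y"
    unfolding AD_seminorm_def by simp
next
  fix s :: "'a set set \<times> 'a set" and c and x :: "'a \<Rightarrow> real"
  show "AD_seminorm s (\<lambda>\<alpha>. c * x \<alpha>) = \<bar>c\<bar> * AD_seminorm s x"
    unfolding AD_seminorm_def
    using L2_set_mult[of c "\<lambda>q. x (Min q) - x (Max q)"] L2_set_mult[of c x]
    by (simp add: right_diff_distrib distrib_left)
next
  fix s :: "'a set set \<times> 'a set" and z :: "nat \<Rightarrow> 'a \<Rightarrow> real" and z0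
  assume "\<And>\<alpha>. (\<lambda>m. z m \<alpha>) \<longlonglongrightarrow> z0 \<alpha>"
  then show "(\<lambda>m. AD_seminorm s (z m)) \<longlonglongrightarrow> AD_seminorm s z0"
    unfolding AD_seminorm_def L2_set_def by (intro tendsto_intros)
qed (rule assms)

lemma coordinate_le_sup_AD_seminorm:
  assumes "{\<alpha>} \<in> \<A>" "D \<in> \<D>"
  shows "ereal \<bar>x \<alpha>\<bar> \<le> sup_seminorm (\<D> \<times> \<A>) AD_seminorm x"
proof -
  have "\<bar>x \<alpha>\<bar> \<le> AD_seminorm (D, {\<alpha>}) x" by (simp add: AD_seminorm_def)
  also have "ereal \<dots> \<le> sup_seminorm (\<D> \<times> \<A>) AD_seminorm x"
    unfolding sup_seminorm_def using assms by (intro SUP_upper) auto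
  finally show ?thesis by simp
qed

lemma consecutive_pairs_inj_on_Min_Max:
  assumes "consecutive_pairs D"
  shows "inj_on Min D" "inj_on Max D"
proof -
  have Min_le_Max: "Min q \<le> Max q" if "q \<in> D" for q
  proof -
    have "finite q" "q \<noteq> {}" using assms that unfolding consecutive_pairs_def
      by (auto intro: card_ge_0_finite)
    then show ?thesis by simp
  qed
  have separated: "Max a < Min b \<or> Max b < Min a" if "a \<in> D" "b \<in> D" "a \<noteq> b" for a b
    using assms that unfolding consecutive_pairs_def by blast
  show "inj_on Min D"
  proof (rule inj_onI, rule ccontr)
    fix a b assume "a \<in> D" "b \<in> D" "Min a = Min b" "a \<noteq> b"
    then show False using separated[of a b] Min_le_Max[of a] Min_le_Max[of b] by (metis leD)
  qed
  show "inj_on Max D"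
  proof (rule inj_onI, rule ccontr)
    fix a b assume "a \<in> D" "b \<in> D" "Max a = Max b" "a \<noteq> b"
    then show False using separated[of a b] Min_le_Max[of a] Min_le_Max[of b] by (metis leD)
  qed
qed

lemma L2_set_pair_differences_le:
  assumes "consecutive_pairs D" and bound: "\<And>G. finite G \<Longrightarrow> L2_set z G \<le> b"
  shows "L2_set (\<lambda>q. z (Min q) - z (Max q)) D \<le> 2 * b"
proof (cases "finite D")
  case True
  have "L2_set (\<lambda>q. z (Min q) + - z (Max q)) D \<le> L2_set (\<lambda>q. z (Min q)) D + L2_set (\<lambda>q. - z (Max q)) D"
    by (rule L2_set_triangle_ineq)
  also have "\<dots> = L2_set z (Min ` D) + L2_set z (Max ` D)"
    using L2_set_reindex[OF consecutive_pairs_inj_on_Min_Max(1)[OF assms(1)], of z]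
      L2_set_reindex[OF consecutive_pairs_inj_on_Min_Max(2)[OF assms(1)], of z] by simp
  also have "\<dots> \<le> 2 * b" using bound[of "Min ` D"] bound[of "Max ` D"] True by simp
  finally show ?thesis by simp
next
  case False
  then show ?thesis using bound[of "{}"] by simp
qed

lemma AD_seminorm_le:
  assumes "consecutive_pairs (fst s)" and bound: "\<And>G. finite G \<Longrightarrow> L2_set z G \<le> b"
  shows "AD_seminorm s z \<le> 3 * b"
proof -
  have "L2_set z (snd s) \<le> b" using bound[of "snd s"] bound[of "{}"] by (cases "finite (snd s)") auto
  then show ?thesis
    unfolding AD_seminorm_def using L2_set_pair_differences_le[OF assms] by simp
qed

theorem proposition2p6:
  fixes \<A> :: "'a::wellorder set set" and \<D> :: "'a set set set"
  assumes omega1_uncountable: "\<not> countable (UNIV :: 'a set)"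
    and omega1_segments: "\<forall>a::'a. countable {..<a}"
    and A_finite: "\<forall>A\<in>\<A>. finite A"
    and A_hereditary: "\<forall>A\<in>\<A>. \<forall>B. B \<subseteq> A \<longrightarrow> B \<in> \<A>"
    and A_singletons: "\<forall>\<alpha>. {\<alpha>} \<in> \<A>"
    and D_finite: "\<forall>D\<in>\<D>. finite D \<and> consecutive_pairs D"
    and D_pairs: "\<forall>p::'a set. card p = 2 \<longrightarrow> {p} \<in> \<D>"
  shows "banach_wrt (XAD \<A> \<D>) (normAD \<A> \<D>) \<and>
         l2_generated TYPE('a \<Rightarrow> real) (XAD \<A> \<D>) (normAD \<A> \<D>)"
proof -
  obtain a b :: 'a where "a \<noteq> b"
    using omega1_uncountable by (metis (full_types) UNIV_eq_I countable_empty countable_insert singletonI)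
  then obtain D where D: "D \<in> \<D>" using D_pairs[rule_format, of "{a, b}"] by auto
  have "\<A> \<noteq> {}" using A_singletons by blast
  then have N_eq: "normAD \<A> \<D> = sup_seminorm (\<D> \<times> \<A>) AD_seminorm"
    using D by (intro normAD_eq_sup_seminorm) auto
  have X_eq: "XAD \<A> \<D> = c00_closure (normAD \<A> \<D>)"
    unfolding XAD_def c00_closure_def ..
  interpret pointwise_continuous_seminorms "\<D> \<times> \<A>" AD_seminorm
    using \<open>\<A> \<noteq> {}\<close> D by (intro pointwise_continuous_seminorms_AD) auto
  have "banach_wrt (c00_closure N) N"
    using A_singletons D by (intro banach_wrt_c00_closure coordinate_le_sup_AD_seminorm) auto
  moreover have "l2_generated TYPE('a \<Rightarrow> real) (c00_closure N) N"
    using D_finite by (intro l2_generated_c00_closure[of 3]) (auto simp: N_le_iff intro: AD_seminorm_le)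
  ultimately show ?thesis unfolding X_eq N_eq by blast
qed

end
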